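(* Let $\hat V=[n]\cup\{s,t\}$, and let $\hat f$ map an edge-weight vector $w\in\mathbb{R}^{\binom{\hat V}{2}}$ (for which the maximizer is unique) to $$\hat f(w)=\arg\max_{y\in\{-1,1\}^{\hat V},\ y_s=1,\ y_t=-1}\ \sum_{\{i,j\}}w_{\{i,j\}}(1-y_iy_j),$$ the unique maximum $s$-$t$ cut. Let $S=\{\{u,v\}:u\in\{s,t\},v\in[n]\}$. Then $S$ is a dominating set of $\hat f$ with sensitivity $2$: whenever $w'$ differs from $w$ on one pair by at most $1$ in absolute value, there is $a$ supported on $S$ with $\|a\|_1\le2$, depending only on $\hat f(w)$ and $w'-w$, such that $\hat f(w'+a)=\hat f(w)$ (with unique maximizer). *)

theory Defs
  imports Complex_Main
begin

datatype vtx = Src | Snk | V nat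

definition Vhat :: "nat \<Rightarrow> vtx set" where
  "Vhat n = {Src, Snk} \<union> V ` {1..n}"

definition edges :: "nat \<Rightarrow> vtx set set" where
  "edges n = {{u, v} | u v. u \<in> Vhat n \<and> v \<in> Vhat n \<and> u \<noteq> v}"

definition Sdom :: "nat \<Rightarrow> vtx set set" where
  "Sdom n = {{u, V k} | u k. u \<in> {Src, Snk} \<and> k \<in> {1..n}}"

definition cuts :: "nat \<Rightarrow> (vtx \<Rightarrow> real) set" where
  "cuts n = {y. (\<forall>v\<in>Vhat n. y v \<in> {-1, 1}) \<and> (\<forall>v. v \<notin> Vhat n \<longrightarrow> y v = 0)
               \<and> y Src = 1 \<and> y Snk = -1}"

definition cutval :: "nat \<Rightarrow> (vtx set \<Rightarrow> real) \<Rightarrow> (vtx \<Rightarrow> real) \<Rightarrow> real" where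
  "cutval n w y = (\<Sum>e\<in>edges n. w e * (1 - (\<Prod>v\<in>e. y v)))"

definition is_unique_max :: "nat \<Rightarrow> (vtx set \<Rightarrow> real) \<Rightarrow> (vtx \<Rightarrow> real) \<Rightarrow> bool" where
  "is_unique_max n w y \<longleftrightarrow> y \<in> cuts n \<and>
     (\<forall>y'\<in>cuts n. y' \<noteq> y \<longrightarrow> cutval n w y' < cutval n w y)"

definition has_unique_max :: "nat \<Rightarrow> (vtx set \<Rightarrow> real) \<Rightarrow> bool" where
  "has_unique_max n w \<longleftrightarrow> (\<exists>y. is_unique_max n w y)"

text \<open>fhat: the unique maximum s-t cut (meaningful when has_unique_max n w).\<close>
definition fhat :: "nat \<Rightarrow> (vtx set \<Rightarrow> real) \<Rightarrow> (vtx \<Rightarrow> real)" where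
  "fhat n w = (THE y. is_unique_max n w y)"

definition one_pair_change :: "nat \<Rightarrow> (vtx set \<Rightarrow> real) \<Rightarrow> (vtx set \<Rightarrow> real) \<Rightarrow> bool" where
  "one_pair_change n w w' \<longleftrightarrow> (\<exists>e\<in>edges n. (\<forall>e'\<in>edges n. e' \<noteq> e \<longrightarrow> w' e' = w e')
       \<and> \<bar>w' e - w e\<bar> \<le> 1)"

definition wdiff :: "nat \<Rightarrow> (vtx set \<Rightarrow> real) \<Rightarrow> (vtx set \<Rightarrow> real) \<Rightarrow> (vtx set \<Rightarrow> real)" where
  "wdiff n w w' = (\<lambda>e. if e \<in> edges n then w' e - w e else 0)"

end

theory Submission
  imports Defs
begin

text \<open>
  A change of weight on the pair {s,t} shifts the value of every s-t cut by the same amount, and a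
  change on a pair joining a terminal to V k is simply undone. A change by \<delta> on an inner pair
  {V k, V j} can alter the value of a competing cut z relative to the optimum y only by 2\<bar>\<delta>\<bar>, and
  only if z separates V k or V j differently from y; raising by \<bar>\<delta>\<bar> the weights of the two
  pairs joining V k and V j to the terminal on the opposite side of y rewards y by exactly that
  amount against every such z, so y stays the unique maximum.
\<close>

lemma finite_Vhat: "finite (Vhat n)"
  by (simp add: Vhat_def)

lemma finite_edges: "finite (edges n)"
  by (rule finite_subset[of _ "Pow (Vhat n)"]) (auto simp: edges_def finite_Vhat)

lemma Sdom_subset_edges: "Sdom n \<subseteq> edges n"
  unfolding Sdom_def edges_def Vhat_def by blast

lemma finite_Sdom: "finite (Sdom n)"
  using finite_subset[OF Sdom_subset_edges finite_edges] .

lemma terminal_pair_in_edges: "{Src, Snk} \<in> edges n"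
  by (auto simp: edges_def Vhat_def)

lemma inner_pair_in_edges: "k \<in> {1..n} \<Longrightarrow> j \<in> {1..n} \<Longrightarrow> k \<noteq> j \<Longrightarrow> {V k, V j} \<in> edges n"
  unfolding edges_def Vhat_def by blast

lemma edges_cases:
  assumes "e \<in> edges n"
  obtains "e = {Src, Snk}"
    | "e \<in> Sdom n"
    | k j where "k \<in> {1..n}" "j \<in> {1..n}" "k \<noteq> j" "e = {V k, V j}"
proof -
  obtain u v where uv: "u \<in> Vhat n" "v \<in> Vhat n" "u \<noteq> v" "e = {u, v}"
    using assms unfolding edges_def by blast
  have endpoint: "x \<in> {Src, Snk} \<or> (\<exists>k\<in>{1..n}. x = V k)" if "x \<in> Vhat n" for x
    using that unfolding Vhat_def by blast
  from endpoint[OF uv(1)] endpoint[OF uv(2)] show thesis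
  proof (elim disjE bexE)
    assume "u \<in> {Src, Snk}" "v \<in> {Src, Snk}"
    then show thesis using that(1) uv by (auto simp: insert_commute)
  next
    fix k assume "u \<in> {Src, Snk}" "k \<in> {1..n}" "v = V k"
    then show thesis using that(2) uv unfolding Sdom_def by blast
  next
    fix k assume "v \<in> {Src, Snk}" "k \<in> {1..n}" "u = V k"
    then show thesis using that(2) uv unfolding Sdom_def by (blast intro: insert_commute)
  next
    fix k j assume "k \<in> {1..n}" "u = V k" "j \<in> {1..n}" "v = V j"
    then show thesis using that(3) uv by blast
  qed
qed

lemma cuts_values:
  assumes "z \<in> cuts n" "k \<in> {1..n}"
  shows "z (V k) \<in> {-1, 1}" "z Src = 1" "z Snk = -1"
  using assms by (auto simp: cuts_def Vhat_def)

lemma cutval_add: "cutval n (\<lambda>e. f e + g e) y = cutval n f y + cutval n g y"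
  unfolding cutval_def by (simp add: distrib_right sum.distrib)

lemma cutval_cong: "(\<And>e. e \<in> edges n \<Longrightarrow> f e = g e) \<Longrightarrow> cutval n f y = cutval n g y"
  unfolding cutval_def by (rule sum.cong) auto

lemma cutval_single_pair:
  assumes "e0 \<in> edges n"
  shows "cutval n (\<lambda>e. if e = e0 then c else 0) y = c * (1 - (\<Prod>v\<in>e0. y v))"
proof -
  have "cutval n (\<lambda>e. if e = e0 then c else 0) y
      = (\<Sum>e\<in>edges n. if e = e0 then c * (1 - (\<Prod>v\<in>e0. y v)) else 0)"
    unfolding cutval_def by (rule sum.cong) auto
  also have "\<dots> = c * (1 - (\<Prod>v\<in>e0. y v))"
    using assms finite_edges by (simp add: sum.delta)
  finally show ?thesis .
qed

lemma is_unique_max_unique: "is_unique_max n w y1 \<Longrightarrow> is_unique_max n w y2 \<Longrightarrow> y1 = y2"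
  unfolding is_unique_max_def by force

lemma fhat_eqI: "is_unique_max n w y \<Longrightarrow> fhat n w = y"
  unfolding fhat_def using is_unique_max_unique by blast

lemma is_unique_max_fhat: "has_unique_max n w \<Longrightarrow> is_unique_max n w (fhat n w)"
  unfolding has_unique_max_def using fhat_eqI by metis

lemma is_unique_max_if_gaps_grow:
  assumes "is_unique_max n w y"
    and "\<And>z. z \<in> cuts n \<Longrightarrow> cutval n w y - cutval n w z \<le> cutval n w' y - cutval n w' z"
  shows "is_unique_max n w' y"
  using assms unfolding is_unique_max_def by (metis diff_gt_0_iff_gt order_less_le_trans)

lemma is_unique_max_add_terminal_pair:
  assumes max: "is_unique_max n w y"
    and w': "\<And>e. e \<in> edges n \<Longrightarrow> w' e = w e + (if e = {Src, Snk} then \<delta> else 0)"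
  shows "is_unique_max n w' y"
proof (rule is_unique_max_if_gaps_grow[OF max])
  have "cutval n w' z = cutval n w z + \<delta> * (1 - z Src * z Snk)" for z
    using cutval_cong[of n w', OF w'] terminal_pair_in_edges
    by (simp add: cutval_add cutval_single_pair)
  moreover have "y \<in> cuts n" using max by (simp add: is_unique_max_def)
  ultimately show "cutval n w y - cutval n w z \<le> cutval n w' y - cutval n w' z"
    if "z \<in> cuts n" for z
    using that by (simp add: cuts_def)
qed

definition opposite_terminal :: "(vtx \<Rightarrow> real) \<Rightarrow> nat \<Rightarrow> vtx" where
  "opposite_terminal y k = (if y (V k) = 1 then Snk else Src)"

lemma opposite_terminal_pair_in_Sdom:
  "k \<in> {1..n} \<Longrightarrow> {opposite_terminal y k, V k} \<in> Sdom n"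
  unfolding Sdom_def opposite_terminal_def by auto

lemma is_unique_max_add_compensated_inner_pair:
  assumes max: "is_unique_max n w y"
    and kj: "k \<in> {1..n}" "j \<in> {1..n}" "k \<noteq> j"
    and c: "\<bar>\<delta>\<bar> \<le> c"
    and w': "\<And>e. e \<in> edges n \<Longrightarrow> w' e = w e + (if e = {V k, V j} then \<delta> else 0)
               + (if e = {opposite_terminal y k, V k} then c else 0)
               + (if e = {opposite_terminal y j, V j} then c else 0)"
  shows "is_unique_max n w' y"
proof (rule is_unique_max_if_gaps_grow[OF max])
  let ?tk = "opposite_terminal y k" and ?tj = "opposite_terminal y j"
  have in_edges: "{V k, V j} \<in> edges n" "{?tk, V k} \<in> edges n" "{?tj, V j} \<in> edges n"
    using kj inner_pair_in_edges opposite_terminal_pair_in_Sdom Sdom_subset_edges by blast+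
  have tk: "?tk \<noteq> V k" and tj: "?tj \<noteq> V j"
    by (simp_all add: opposite_terminal_def)
  have cv: "cutval n w' z = cutval n w z + \<delta> * (1 - z (V k) * z (V j))
      + c * (1 - z ?tk * z (V k)) + c * (1 - z ?tj * z (V j))" for z
    using cutval_cong[of n w', OF w'] in_edges kj tk tj
    by (simp add: cutval_add cutval_single_pair)
  have y: "y \<in> cuts n" using max by (simp add: is_unique_max_def)
  show "cutval n w y - cutval n w z \<le> cutval n w' y - cutval n w' z" if z: "z \<in> cuts n" for z
    unfolding cv using cuts_values[OF z kj(1)] cuts_values[OF z kj(2)]
      cuts_values[OF y kj(1)] cuts_values[OF y kj(2)] c
    by (auto simp: opposite_terminal_def abs_le_iff algebra_simps)
qed

definition changed_inner_pair :: "nat \<Rightarrow> (vtx set \<Rightarrow> real) \<Rightarrow> nat \<times> nat \<Rightarrow> bool" where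
  "changed_inner_pair n d = (\<lambda>(k, j). k \<in> {1..n} \<and> j \<in> {1..n} \<and> k \<noteq> j \<and> d {V k, V j} \<noteq> 0)"

definition compensation :: "nat \<Rightarrow> (vtx \<Rightarrow> real) \<Rightarrow> (vtx set \<Rightarrow> real) \<Rightarrow> vtx set \<Rightarrow> real" where
  "compensation n y d =
     (if \<exists>p. changed_inner_pair n d p then
        (case SOME p. changed_inner_pair n d p of (k, j) \<Rightarrow>
           \<lambda>e. (if e = {opposite_terminal y k, V k} then \<bar>d {V k, V j}\<bar> else 0)
             + (if e = {opposite_terminal y j, V j} then \<bar>d {V k, V j}\<bar> else 0))
      else (\<lambda>e. if e \<in> Sdom n then - d e else 0))"

lemma compensation_inner_pair:
  assumes kj: "k \<in> {1..n}" "j \<in> {1..n}" "k \<noteq> j" and "\<delta> \<noteq> 0"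
  shows "compensation n y (\<lambda>e. if e = {V k, V j} then \<delta> else 0)
       = (\<lambda>e. (if e = {opposite_terminal y k, V k} then \<bar>\<delta>\<bar> else 0)
             + (if e = {opposite_terminal y j, V j} then \<bar>\<delta>\<bar> else 0))"
proof -
  define d where "d = (\<lambda>e. if e = {V k, V j} then \<delta> else (0::real))"
  have "changed_inner_pair n d (k, j)"
    using assms by (simp add: changed_inner_pair_def d_def)
  then have ex: "\<exists>p. changed_inner_pair n d p" ..
  obtain k' j' where p: "(SOME p. changed_inner_pair n d p) = (k', j')" by fastforce
  from someI_ex[OF ex] have "changed_inner_pair n d (k', j')" unfolding p .
  then have "{V k', V j'} = {V k, V j}"
    by (auto simp: changed_inner_pair_def d_def split: if_splits)
  then have "(k', j') = (k, j) \<or> (k', j') = (j, k)"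
    by (auto simp: doubleton_eq_iff)
  then show ?thesis
    using ex p unfolding d_def[symmetric] compensation_def
    by (auto simp: d_def insert_commute add.commute)
qed

lemma compensation_no_changed_inner_pair:
  assumes "\<And>k j. k \<in> {1..n} \<Longrightarrow> j \<in> {1..n} \<Longrightarrow> k \<noteq> j \<Longrightarrow> d {V k, V j} = 0"
  shows "compensation n y d = (\<lambda>e. if e \<in> Sdom n then - d e else 0)"
  using assms unfolding compensation_def changed_inner_pair_def by auto

definition repairs_on_Sdom :: "nat \<Rightarrow> (vtx set \<Rightarrow> real) \<Rightarrow> (vtx \<Rightarrow> real) \<Rightarrow> (vtx set \<Rightarrow> real) \<Rightarrow> bool" where
  "repairs_on_Sdom n w' y a \<longleftrightarrow> (\<forall>e. e \<notin> Sdom n \<longrightarrow> a e = 0) \<and> (\<Sum>e\<in>Sdom n. \<bar>a e\<bar>) \<le> 2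
     \<and> is_unique_max n (\<lambda>e. w' e + a e) y"

lemma wdiff_eq: "e \<in> edges n \<Longrightarrow> w' e = w e + wdiff n w w' e"
  by (simp add: wdiff_def)

lemma one_pair_change_wdiff:
  assumes "one_pair_change n w w'"
  obtains e0 \<delta> where "e0 \<in> edges n" "\<bar>\<delta>\<bar> \<le> 1" "wdiff n w w' = (\<lambda>e. if e = e0 then \<delta> else 0)"
proof -
  obtain e0 where "e0 \<in> edges n" "\<And>e. e \<in> edges n \<Longrightarrow> e \<noteq> e0 \<Longrightarrow> w' e = w e"
    "\<bar>w' e0 - w e0\<bar> \<le> 1"
    using assms unfolding one_pair_change_def by blast
  then show thesis
    by (intro that[of e0 "w' e0 - w e0"]) (auto simp: wdiff_def)
qed

lemma compensation_repairs_inner_pair_change: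
  assumes max: "is_unique_max n w y"
    and kj: "k \<in> {1..n}" "j \<in> {1..n}" "k \<noteq> j"
    and \<delta>: "\<delta> \<noteq> 0" "\<bar>\<delta>\<bar> \<le> 1"
    and d: "wdiff n w w' = (\<lambda>e. if e = {V k, V j} then \<delta> else 0)"
  shows "repairs_on_Sdom n w' y (compensation n y (wdiff n w w'))"
proof -
  let ?Ek = "{opposite_terminal y k, V k}" and ?Ej = "{opposite_terminal y j, V j}"
  have a: "compensation n y (wdiff n w w')
      = (\<lambda>e. (if e = ?Ek then \<bar>\<delta>\<bar> else 0) + (if e = ?Ej then \<bar>\<delta>\<bar> else 0))"
    unfolding d using compensation_inner_pair[OF kj \<delta>(1)] .
  have S: "?Ek \<in> Sdom n" "?Ej \<in> Sdom n"
    using kj opposite_terminal_pair_in_Sdom by blast+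
  have "?Ek \<noteq> ?Ej"
    using kj by (auto simp: opposite_terminal_def doubleton_eq_iff)
  then have "(\<Sum>e\<in>Sdom n. \<bar>(if e = ?Ek then \<bar>\<delta>\<bar> else 0) + (if e = ?Ej then \<bar>\<delta>\<bar> else 0)\<bar>)
      = 2 * \<bar>\<delta>\<bar>"
    using S finite_Sdom by (simp add: sum.distrib sum.delta if_distrib[of abs] cong: if_cong)
  moreover have "is_unique_max n (\<lambda>e. w' e
      + ((if e = ?Ek then \<bar>\<delta>\<bar> else 0) + (if e = ?Ej then \<bar>\<delta>\<bar> else 0))) y"
    by (rule is_unique_max_add_compensated_inner_pair[OF max kj order_refl])
      (simp add: wdiff_eq[of _ n w' w] d)
  ultimately show ?thesis
    unfolding repairs_on_Sdom_def a using S \<delta>(2) by auto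
qed

lemma compensation_repairs_other_change:
  assumes max: "is_unique_max n w y"
    and inner: "\<And>k j. k \<in> {1..n} \<Longrightarrow> j \<in> {1..n} \<Longrightarrow> k \<noteq> j \<Longrightarrow> wdiff n w w' {V k, V j} = 0"
    and \<delta>: "\<bar>\<delta>\<bar> \<le> 1"
    and d: "wdiff n w w' = (\<lambda>e. if e = e0 then \<delta> else 0)"
  shows "repairs_on_Sdom n w' y (compensation n y (wdiff n w w'))"
proof -
  let ?d = "wdiff n w w'"
  have a: "compensation n y ?d = (\<lambda>e. if e \<in> Sdom n then - ?d e else 0)"
    by (rule compensation_no_changed_inner_pair) (rule inner)
  have "(\<Sum>e\<in>Sdom n. \<bar>if e \<in> Sdom n then - ?d e else 0\<bar>) = (\<Sum>e\<in>Sdom n. if e = e0 then \<bar>\<delta>\<bar> else 0)"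
    by (rule sum.cong) (auto simp: d)
  also have "\<dots> \<le> 1"
    using finite_Sdom \<delta> by (simp add: sum.delta)
  finally have sum: "(\<Sum>e\<in>Sdom n. \<bar>if e \<in> Sdom n then - ?d e else 0\<bar>) \<le> 2" by simp
  have "w' e + (if e \<in> Sdom n then - ?d e else 0)
      = w e + (if e = {Src, Snk} then ?d {Src, Snk} else 0)" if e: "e \<in> edges n" for e
    using e
  proof (cases rule: edges_cases)
    case 1
    then have "e \<notin> Sdom n" by (auto simp: Sdom_def doubleton_eq_iff)
    with 1 show ?thesis using wdiff_eq[OF e, of w' w] by simp
  next
    case 2
    then have "e \<noteq> {Src, Snk}" by (auto simp: Sdom_def doubleton_eq_iff)
    with 2 show ?thesis using wdiff_eq[OF e, of w' w] by simp
  next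
    case (3 k j)
    then have "e \<notin> Sdom n" "e \<noteq> {Src, Snk}" by (auto simp: Sdom_def doubleton_eq_iff)
    with 3 show ?thesis using wdiff_eq[OF e, of w' w] inner by simp
  qed
  then have "is_unique_max n (\<lambda>e. w' e + (if e \<in> Sdom n then - ?d e else 0)) y"
    by (rule is_unique_max_add_terminal_pair[OF max])
  then show ?thesis
    unfolding repairs_on_Sdom_def a using sum by auto
qed

lemma compensation_repairs:
  assumes max: "is_unique_max n w y" and change: "one_pair_change n w w'"
  shows "repairs_on_Sdom n w' y (compensation n y (wdiff n w w'))"
proof -
  obtain e0 \<delta> where \<delta>: "\<bar>\<delta>\<bar> \<le> 1" and d: "wdiff n w w' = (\<lambda>e. if e = e0 then \<delta> else 0)"
    using change by (rule one_pair_change_wdiff)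
  show ?thesis
  proof (cases "\<exists>k j. k \<in> {1..n} \<and> j \<in> {1..n} \<and> k \<noteq> j \<and> e0 = {V k, V j} \<and> \<delta> \<noteq> 0")
    case True
    then obtain k j where "k \<in> {1..n}" "j \<in> {1..n}" "k \<noteq> j" "e0 = {V k, V j}" "\<delta> \<noteq> 0"
      by blast
    then show ?thesis
      using compensation_repairs_inner_pair_change[OF max _ _ _ _ \<delta>] d by blast
  next
    case False
    then have "wdiff n w w' {V k, V j} = 0" if "k \<in> {1..n}" "j \<in> {1..n}" "k \<noteq> j" for k j
      using that by (auto simp: d)
    then show ?thesis
      using compensation_repairs_other_change[OF max _ \<delta> d] by blast
  qed
qed

theorem lemma5p7:
  fixes n :: nat
  shows "\<exists>A :: (vtx \<Rightarrow> real) \<Rightarrow> (vtx set \<Rightarrow> real) \<Rightarrow> (vtx set \<Rightarrow> real).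
           \<forall>w w'. has_unique_max n w \<and> one_pair_change n w w' \<longrightarrow>
             (let a = A (fhat n w) (wdiff n w w') in
                (\<forall>e. e \<notin> Sdom n \<longrightarrow> a e = 0)
              \<and> (\<Sum>e\<in>Sdom n. \<bar>a e\<bar>) \<le> 2
              \<and> has_unique_max n (\<lambda>e. w' e + a e)
              \<and> fhat n (\<lambda>e. w' e + a e) = fhat n w)"
proof (intro exI allI impI)
  fix w w'
  assume "has_unique_max n w \<and> one_pair_change n w w'"
  then have "repairs_on_Sdom n w' (fhat n w) (compensation n (fhat n w) (wdiff n w w'))"
    by (blast intro: compensation_repairs is_unique_max_fhat)
  then show "let a = compensation n (fhat n w) (wdiff n w w') in
      (\<forall>e. e \<notin> Sdom n \<longrightarrow> a e = 0) \<and> (\<Sum>e\<in>Sdom n. \<bar>a e\<bar>) \<le> 2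
      \<and> has_unique_max n (\<lambda>e. w' e + a e) \<and> fhat n (\<lambda>e. w' e + a e) = fhat n w"
    unfolding repairs_on_Sdom_def Let_def has_unique_max_def by (blast intro: fhat_eqI)
qed

end
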